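(* Let $\phi\colon\mathbb{R}\to\mathbb{R}$ be an increasing homeomorphism with $\phi(0)=0$, let $f\colon\mathbb{R}\to\mathbb{R}$ be continuous and let $h\colon[0,T]\times\mathbb{R}\to\mathbb{R}$ be a Carathéodory function such that there exists $\gamma\in L^1([0,T],\mathbb{R}^+)$ with $h(t,u)\ge-\gamma(t)$ for a.e. $t\in[0,T]$ and all $u\in\mathbb{R}$. For $\lambda\in\,]0,1]$ consider $$(\phi(u'))'+\lambda f(u)u'+\lambda h(t,u)=0. \qquad (\ast_\lambda)$$ Then there exists a constant $K_0=K_0(\gamma)$ such that every $T$-periodic solution $u$ of $(\ast_\lambda)$ with $\lambda\in\,]0,1]$ satisfies $\max u-\min u\le K_0$ and $\|u'\|_{L^1}\le K_0$. Moreover, for any $\ell_1<\ell_2$ there exists $K_1>0$ such that every $T$-periodic solution $u$ of $(\ast_\lambda)$ with $\lambda\in\,]0,1]$ and $\ell_1\le u(t)\le\ell_2$ for all $t\in[0,T]$ satisfies $\|u'\|_\infty\le K_1$.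
   Context: A $T$-periodic solution is a $u\in\mathcal{C}^1([0,T])$ with $u(0)=u(T)$, $u'(0)=u'(T)$, $\phi(u')$ absolutely continuous, satisfying the equation a.e. A Carathéodory function is measurable in $t$, continuous in $u$, and for each $r>0$ bounded in absolute value on $[0,T]\times[-r,r]$ by an $L^1$ function of $t$. $\mathbb{R}^+$ denotes the nonnegative reals. *)

theory Defs
  imports "HOL-Analysis.Analysis"
begin

definition abs_cont_on :: "real set \<Rightarrow> (real \<Rightarrow> real) \<Rightarrow> bool" where
  "abs_cont_on S g \<longleftrightarrow>
     (\<forall>e>0. \<exists>d>0. \<forall>n::nat. \<forall>a b. 
        (\<forall>i<n. a i \<in> S \<and> b i \<in> S \<and> a i \<le> b i) \<and>
        (\<forall>i<n. \<forall>j<n. i \<noteq> j \<longrightarrow> b i \<le> a j \<or> b j \<le> a i) \<and>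
        (\<Sum>i<n. b i - a i) < d
        \<longrightarrow> (\<Sum>i<n. \<bar>g (b i) - g (a i)\<bar>) < e)"

definition caratheodory :: "real \<Rightarrow> (real \<Rightarrow> real \<Rightarrow> real) \<Rightarrow> bool" where
  "caratheodory T h \<longleftrightarrow>
     (\<forall>x. (\<lambda>t. h t x) measurable_on {0..T}) \<and>
     (\<forall>t\<in>{0..T}. continuous_on UNIV (h t)) \<and>
     (\<forall>r>0. \<exists>g. g absolutely_integrable_on {0..T} \<and>
        (\<forall>t\<in>{0..T}. \<forall>x. \<bar>x\<bar> \<le> r \<longrightarrow> \<bar>h t x\<bar> \<le> g t))"

definition periodic_solution ::
  "(real \<Rightarrow> real) \<Rightarrow> (real \<Rightarrow> real) \<Rightarrow> (real \<Rightarrow> real \<Rightarrow> real) \<Rightarrow> real \<Rightarrow> real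
     \<Rightarrow> (real \<Rightarrow> real) \<Rightarrow> (real \<Rightarrow> real) \<Rightarrow> bool" where
  "periodic_solution \<phi> f h T lam u u' \<longleftrightarrow>
     (\<forall>t\<in>{0..T}. (u has_real_derivative u' t) (at t within {0..T})) \<and>
     continuous_on {0..T} u' \<and>
     u 0 = u T \<and> u' 0 = u' T \<and>
     abs_cont_on {0..T} (\<lambda>t. \<phi> (u' t)) \<and>
     (AE t in lebesgue. t \<in> {0..T} \<longrightarrow>
        ((\<lambda>s. \<phi> (u' s)) has_real_derivative
           (- lam * f (u t) * u' t - lam * h t (u t))) (at t within {0..T}))"

end

theory Submission
  imports Defs
begin

(* Let F be a primitive of f. Along a solution the energy w = phi(u') + lam F(u) is absolutely
   continuous and T-periodic, and w' = - lam h(t,u) <= gamma almost everywhere, so the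
   oscillation of w is at most the integral of gamma. (That an absolutely continuous function
   with a.e. derivative bounded by g increases by at most the integral of g is shown with a gauge
   argument: the straddle lemma away from the exceptional null set, absolute continuity on a
   small open cover of it.) Every value of u is taken at a point where u' <= 0 and at one where
   u' >= 0 (the last crossing of that level before a minimum, resp. maximum), and w compares the
   two points, so |phi(u')| <= integral gamma. Hence |u'| <= R for a constant R depending only on
   phi and gamma, which gives both bounds. *)

lemma abs_cont_on_add:
  assumes "abs_cont_on S f" "abs_cont_on S g"
  shows "abs_cont_on S (\<lambda>x. f x + g x)"
  unfolding abs_cont_on_def
proof (intro allI impI)
  fix e :: real assume e: "e > 0"
  obtain d1 where d1: "d1 > 0" "\<forall>n::nat. \<forall>a b. (\<forall>i<n. a i \<in> S \<and> b i \<in> S \<and> a i \<le> b i) \<and>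
        (\<forall>i<n. \<forall>j<n. i \<noteq> j \<longrightarrow> b i \<le> a j \<or> b j \<le> a i) \<and> (\<Sum>i<n. b i - a i) < d1
        \<longrightarrow> (\<Sum>i<n. \<bar>f (b i) - f (a i)\<bar>) < e/2"
    using assms(1)[unfolded abs_cont_on_def, rule_format, of "e/2"] e by auto
  obtain d2 where d2: "d2 > 0" "\<forall>n::nat. \<forall>a b. (\<forall>i<n. a i \<in> S \<and> b i \<in> S \<and> a i \<le> b i) \<and>
        (\<forall>i<n. \<forall>j<n. i \<noteq> j \<longrightarrow> b i \<le> a j \<or> b j \<le> a i) \<and> (\<Sum>i<n. b i - a i) < d2
        \<longrightarrow> (\<Sum>i<n. \<bar>g (b i) - g (a i)\<bar>) < e/2"
    using assms(2)[unfolded abs_cont_on_def, rule_format, of "e/2"] e by auto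
  show "\<exists>d>0. \<forall>n::nat. \<forall>a b. (\<forall>i<n. a i \<in> S \<and> b i \<in> S \<and> a i \<le> b i) \<and>
        (\<forall>i<n. \<forall>j<n. i \<noteq> j \<longrightarrow> b i \<le> a j \<or> b j \<le> a i) \<and> (\<Sum>i<n. b i - a i) < d
        \<longrightarrow> (\<Sum>i<n. \<bar>(f (b i) + g (b i)) - (f (a i) + g (a i))\<bar>) < e"
  proof (intro exI[of _ "min d1 d2"] conjI allI impI)
    show "min d1 d2 > 0" using d1 d2 by simp
    fix n :: nat and a b :: "nat \<Rightarrow> real"
    assume H: "(\<forall>i<n. a i \<in> S \<and> b i \<in> S \<and> a i \<le> b i) \<and>
        (\<forall>i<n. \<forall>j<n. i \<noteq> j \<longrightarrow> b i \<le> a j \<or> b j \<le> a i) \<and> (\<Sum>i<n. b i - a i) < min d1 d2"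
    have "(\<Sum>i<n. \<bar>(f (b i) + g (b i)) - (f (a i) + g (a i))\<bar>)
        \<le> (\<Sum>i<n. \<bar>f (b i) - f (a i)\<bar> + \<bar>g (b i) - g (a i)\<bar>)"
      by (rule sum_mono) (rule abs_triangle_ineq[THEN order.trans[rotated]], simp)
    also have "\<dots> = (\<Sum>i<n. \<bar>f (b i) - f (a i)\<bar>) + (\<Sum>i<n. \<bar>g (b i) - g (a i)\<bar>)"
      by (rule sum.distrib)
    also have "\<dots> < e" using d1(2)[rule_format, of n a b] d2(2)[rule_format, of n a b] H by simp
    finally show "(\<Sum>i<n. \<bar>(f (b i) + g (b i)) - (f (a i) + g (a i))\<bar>) < e" .
  qed
qed

lemma abs_cont_on_lipschitz:
  assumes B: "B > 0" and L: "\<And>x y. x \<in> S \<Longrightarrow> y \<in> S \<Longrightarrow> \<bar>g x - g y\<bar> \<le> B * \<bar>x - y\<bar>"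
  shows "abs_cont_on S g"
  unfolding abs_cont_on_def
proof (intro allI impI)
  fix e :: real assume "e > 0"
  show "\<exists>d>0. \<forall>n::nat. \<forall>a b. (\<forall>i<n. a i \<in> S \<and> b i \<in> S \<and> a i \<le> b i) \<and>
        (\<forall>i<n. \<forall>j<n. i \<noteq> j \<longrightarrow> b i \<le> a j \<or> b j \<le> a i) \<and> (\<Sum>i<n. b i - a i) < d
        \<longrightarrow> (\<Sum>i<n. \<bar>g (b i) - g (a i)\<bar>) < e"
  proof (intro exI[of _ "e/B"] conjI allI impI)
    fix n :: nat and a b assume H: "(\<forall>i<n. a i \<in> S \<and> b i \<in> S \<and> a i \<le> b i) \<and>
        (\<forall>i<n. \<forall>j<n. i \<noteq> j \<longrightarrow> b i \<le> a j \<or> b j \<le> a i) \<and> (\<Sum>i<n. b i - a i) < e/B"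
    have "(\<Sum>i<n. \<bar>g (b i) - g (a i)\<bar>) \<le> (\<Sum>i<n. B * (b i - a i))"
    proof (rule sum_mono)
      fix i assume "i \<in> {..<n}"
      then show "\<bar>g (b i) - g (a i)\<bar> \<le> B * (b i - a i)" using H L[of "b i" "a i"] by auto
    qed
    also have "\<dots> = B * (\<Sum>i<n. b i - a i)" by (simp add: sum_distrib_left)
    also have "\<dots> < e" using H B by (simp add: field_simps)
    finally show "(\<Sum>i<n. \<bar>g (b i) - g (a i)\<bar>) < e" .
  qed (use B \<open>e > 0\<close> in simp)
qed

lemma abs_cont_on_subset:
  assumes "abs_cont_on S g" "T \<subseteq> S"
  shows "abs_cont_on T g"
  unfolding abs_cont_on_def
proof (intro allI impI)
  fix e :: real assume "e > 0"
  then obtain d where "d > 0" and d: "\<forall>n::nat. \<forall>a b. (\<forall>i<n. a i \<in> S \<and> b i \<in> S \<and> a i \<le> b i) \<and>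
        (\<forall>i<n. \<forall>j<n. i \<noteq> j \<longrightarrow> b i \<le> a j \<or> b j \<le> a i) \<and> (\<Sum>i<n. b i - a i) < d
        \<longrightarrow> (\<Sum>i<n. \<bar>g (b i) - g (a i)\<bar>) < e"
    using assms(1) unfolding abs_cont_on_def by blast
  show "\<exists>d>0. \<forall>n::nat. \<forall>a b. (\<forall>i<n. a i \<in> T \<and> b i \<in> T \<and> a i \<le> b i) \<and>
        (\<forall>i<n. \<forall>j<n. i \<noteq> j \<longrightarrow> b i \<le> a j \<or> b j \<le> a i) \<and> (\<Sum>i<n. b i - a i) < d
        \<longrightarrow> (\<Sum>i<n. \<bar>g (b i) - g (a i)\<bar>) < e"
  proof (intro exI[of _ d] conjI allI impI)
    fix n :: nat and a b assume "(\<forall>i<n. a i \<in> T \<and> b i \<in> T \<and> a i \<le> b i) \<and>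
        (\<forall>i<n. \<forall>j<n. i \<noteq> j \<longrightarrow> b i \<le> a j \<or> b j \<le> a i) \<and> (\<Sum>i<n. b i - a i) < d"
    then show "(\<Sum>i<n. \<bar>g (b i) - g (a i)\<bar>) < e" using d[rule_format, of n a b] assms(2) by blast
  qed (fact \<open>d > 0\<close>)
qed

lemma division_of_real_interval:
  fixes \<D> :: "real set set"
  assumes "\<D> division_of S" "K \<in> \<D>"
  obtains x y where "K = {x..y}" "x \<le> y"
proof -
  obtain x y where "K = cbox x y" "K \<noteq> {}" using division_ofD(3,4)[OF assms] by metis
  then show thesis using that by auto
qed

lemma division_of_real_intervals_ordered:
  fixes \<D> :: "real set set"
  assumes div: "\<D> division_of S" and KL: "K \<in> \<D>" "L \<in> \<D>" "K \<noteq> L"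
    and nondeg: "Inf K < Sup K" "Inf L < Sup L"
  shows "Sup K \<le> Inf L \<or> Sup L \<le> Inf K"
proof -
  obtain a b where K: "K = {a..b}" "a \<le> b" using division_of_real_interval[OF div KL(1)] .
  obtain c d where L: "L = {c..d}" "c \<le> d" using division_of_real_interval[OF div KL(2)] .
  have "interior K \<inter> interior L = {}" using division_ofD(5)[OF div KL] .
  then have "\<not> max a c < min b d"
    by (auto simp: K L dest!: dense[of "max a c"])
  then show ?thesis using K L nondeg by auto
qed

lemma division_of_real_enumeration:
  fixes \<D> :: "real set set"
  assumes div: "\<D> division_of S"
  obtains n :: nat and a b :: "nat \<Rightarrow> real" where "\<And>i. i < n \<Longrightarrow> a i < b i \<and> {a i..b i} \<subseteq> S"
    "\<And>i j. i < n \<Longrightarrow> j < n \<Longrightarrow> i \<noteq> j \<Longrightarrow> b i \<le> a j \<or> b j \<le> a i"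
    "\<And>F :: real \<Rightarrow> real \<Rightarrow> real. (\<And>x. F x x = 0) \<Longrightarrow> (\<Sum>K\<in>\<D>. F (Inf K) (Sup K)) = (\<Sum>i<n. F (a i) (b i))"
proof -
  have ival: "Inf K \<le> Sup K" "{Inf K..Sup K} \<subseteq> S" if K: "K \<in> \<D>" for K
  proof -
    obtain x y where "K = {x..y}" "x \<le> y" using division_of_real_interval[OF div K] .
    then show "Inf K \<le> Sup K" "{Inf K..Sup K} \<subseteq> S" using division_ofD(2)[OF div K] by auto
  qed
  define \<D>' where "\<D>' = {K\<in>\<D>. Inf K < Sup K}"
  have fin: "finite \<D>'" using div by (simp add: \<D>'_def division_of_def)
  obtain k where k: "bij_betw k {..<card \<D>'} \<D>'"
    using ex_bij_betw_nat_finite[OF fin] by (auto simp: atLeast0LessThan)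
  have kD: "k i \<in> \<D>" "Inf (k i) < Sup (k i)" if "i < card \<D>'" for i
    using k that by (auto simp: bij_betw_def \<D>'_def)
  show thesis
  proof (rule that[of "card \<D>'" "\<lambda>i. Inf (k i)" "\<lambda>i. Sup (k i)"])
    show "Inf (k i) < Sup (k i) \<and> {Inf (k i)..Sup (k i)} \<subseteq> S" if "i < card \<D>'" for i
      using kD ival(2) that by auto
    show "Sup (k i) \<le> Inf (k j) \<or> Sup (k j) \<le> Inf (k i)"
      if ij: "i < card \<D>'" "j < card \<D>'" "i \<noteq> j" for i j
    proof -
      have "k i \<noteq> k j" using k ij by (auto simp: bij_betw_def inj_on_def)
      then show ?thesis using division_of_real_intervals_ordered[OF div] kD ij by blast
    qed
    fix F :: "real \<Rightarrow> real \<Rightarrow> real" assume F: "\<And>x. F x x = 0"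
    have "(\<Sum>K\<in>\<D>. F (Inf K) (Sup K)) = (\<Sum>K\<in>\<D>'. F (Inf K) (Sup K))"
    proof (rule sum.mono_neutral_right)
      show "finite \<D>" using div by (rule division_of_finite)
      show "\<forall>K\<in>\<D> - \<D>'. F (Inf K) (Sup K) = 0" using ival(1) F by (force simp: \<D>'_def)
    qed (auto simp: \<D>'_def)
    also have "\<dots> = (\<Sum>i<card \<D>'. F (Inf (k i)) (Sup (k i)))"
      using sum.reindex_bij_betw[OF k, of "\<lambda>K. F (Inf K) (Sup K)"] by simp
    finally show "(\<Sum>K\<in>\<D>. F (Inf K) (Sup K)) = (\<Sum>i<card \<D>'. F (Inf (k i)) (Sup (k i)))" .
  qed
qed

lemma abs_cont_on_division:
  assumes ac: "abs_cont_on S w" and "e > 0"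
  obtains d where "d > 0"
    "\<And>\<D>. \<D> division_of \<Union>\<D> \<Longrightarrow> \<Union>\<D> \<subseteq> S \<Longrightarrow> (\<Sum>K\<in>\<D>. measure lborel K) < d
      \<Longrightarrow> (\<Sum>K\<in>\<D>. \<bar>w (Sup K) - w (Inf K)\<bar>) < e"
proof -
  obtain d where "d > 0" and d: "\<forall>n::nat. \<forall>a b. (\<forall>i<n. a i \<in> S \<and> b i \<in> S \<and> a i \<le> b i) \<and>
        (\<forall>i<n. \<forall>j<n. i \<noteq> j \<longrightarrow> b i \<le> a j \<or> b j \<le> a i) \<and> (\<Sum>i<n. b i - a i) < d
        \<longrightarrow> (\<Sum>i<n. \<bar>w (b i) - w (a i)\<bar>) < e"
    using ac[unfolded abs_cont_on_def, rule_format, OF \<open>e > 0\<close>] by blast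
  have "(\<Sum>K\<in>\<D>. \<bar>w (Sup K) - w (Inf K)\<bar>) < e"
    if div: "\<D> division_of \<Union>\<D>" and sub: "\<Union>\<D> \<subseteq> S" and small: "(\<Sum>K\<in>\<D>. measure lborel K) < d"
    for \<D> :: "real set set"
  proof (rule division_of_real_enumeration[OF div])
    fix n :: nat and a b :: "nat \<Rightarrow> real"
    assume ab: "\<And>i. i < n \<Longrightarrow> a i < b i \<and> {a i..b i} \<subseteq> \<Union>\<D>"
      and disj: "\<And>i j. i < n \<Longrightarrow> j < n \<Longrightarrow> i \<noteq> j \<Longrightarrow> b i \<le> a j \<or> b j \<le> a i"
      and sums: "\<And>F :: real \<Rightarrow> real \<Rightarrow> real. (\<And>x. F x x = 0)
        \<Longrightarrow> (\<Sum>K\<in>\<D>. F (Inf K) (Sup K)) = (\<Sum>i<n. F (a i) (b i))"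
    have "measure lborel K = Sup K - Inf K" if K: "K \<in> \<D>" for K
    proof -
      obtain x y where "K = {x..y}" "x \<le> y" using division_of_real_interval[OF div K] .
      then show ?thesis by simp
    qed
    then have "(\<Sum>i<n. b i - a i) = (\<Sum>K\<in>\<D>. measure lborel K)"
      using sums[of "\<lambda>x y. y - x"] by simp
    have "(\<Sum>i<n. \<bar>w (b i) - w (a i)\<bar>) < e"
    proof (rule d[rule_format], intro conjI allI impI)
      fix i assume "i < n"
      then have "a i < b i" "{a i..b i} \<subseteq> S" using ab sub by auto
      then show "a i \<in> S" "b i \<in> S" "a i \<le> b i" by auto
    next
      show "(\<Sum>i<n. b i - a i) < d" using \<open>(\<Sum>i<n. b i - a i) = _\<close> small by simp
    qed (use disj in blast)
    then show ?thesis using sums[of "\<lambda>x y. \<bar>w y - w x\<bar>"] by simp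
  qed
  with \<open>d > 0\<close> show thesis using that by blast
qed

lemma sum_tagged_partial_division_eq_sum_division:
  fixes P :: "('a::euclidean_space \<times> 'a set) set" and g :: "'a set \<Rightarrow> 'b::comm_monoid_add"
  assumes P: "P tagged_partial_division_of S"
    and null: "\<And>K. K \<in> snd ` P \<Longrightarrow> measure lborel K = 0 \<Longrightarrow> g K = 0"
  shows "(\<Sum>(t, K)\<in>P. g K) = (\<Sum>K\<in>snd ` P. g K)"
proof -
  have "g K = 0" if tK: "(t, K) \<in> P" "(t', K) \<in> P" "t \<noteq> t'" for t t' K
  proof -
    have "interior K = {}" using tagged_partial_division_ofD(5)[OF P tK(1,2)] tK(3) by auto
    moreover obtain a b where "K = cbox a b" using tagged_partial_division_ofD(4)[OF P tK(1)] by blast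
    ultimately show ?thesis using null tK(1) by (metis content_eq_0_interior image_eqI snd_conv)
  qed
  then have "(\<Sum>K\<in>snd ` P. g K) = (\<Sum>q\<in>P. (g \<circ> snd) q)"
    by (intro sum.reindex_nontrivial tagged_partial_division_ofD(1)[OF P]) (metis prod.collapse)
  then show ?thesis by (simp add: split_def)
qed

lemma abs_cont_on_tagged_partial_division:
  assumes ac: "abs_cont_on S w" and "e > 0"
  obtains d where "d > 0"
    "\<And>P. P tagged_partial_division_of S \<Longrightarrow> (\<Sum>(t, K)\<in>P. measure lborel K) < d
      \<Longrightarrow> (\<Sum>(t, K)\<in>P. \<bar>w (Sup K) - w (Inf K)\<bar>) < e"
proof -
  obtain d where "d > 0" and d: "\<And>\<D>. \<D> division_of \<Union>\<D> \<Longrightarrow> \<Union>\<D> \<subseteq> S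
      \<Longrightarrow> (\<Sum>K\<in>\<D>. measure lborel K) < d \<Longrightarrow> (\<Sum>K\<in>\<D>. \<bar>w (Sup K) - w (Inf K)\<bar>) < e"
    using abs_cont_on_division[OF assms] by blast
  have "(\<Sum>(t, K)\<in>P. \<bar>w (Sup K) - w (Inf K)\<bar>) < e"
    if P: "P tagged_partial_division_of S" and small: "(\<Sum>(t, K)\<in>P. measure lborel K) < d" for P
  proof -
    have div: "snd ` P division_of \<Union>(snd ` P)" by (rule partial_division_of_tagged_division[OF P])
    have "Sup K = Inf K" if K: "K \<in> snd ` P" "measure lborel K = 0" for K
    proof -
      obtain x y where "K = {x..y}" "x \<le> y" using division_of_real_interval[OF div K(1)] .
      then show ?thesis using K(2) by simp
    qed
    then have "(\<Sum>(t, K)\<in>P. \<bar>w (Sup K) - w (Inf K)\<bar>) = (\<Sum>K\<in>snd ` P. \<bar>w (Sup K) - w (Inf K)\<bar>)"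
      by (simp add: sum_tagged_partial_division_eq_sum_division[OF P])
    also have "\<dots> < e"
    proof (rule d[OF div])
      show "\<Union>(snd ` P) \<subseteq> S" using tagged_partial_division_ofD(3)[OF P] by force
      show "(\<Sum>K\<in>snd ` P. measure lborel K) < d"
        using small sum_tagged_partial_division_eq_sum_division[OF P, of "measure lborel"] by simp
    qed
    finally show ?thesis .
  qed
  with \<open>d > 0\<close> show thesis using that by blast
qed

lemma sum_content_tagged_partial_division_le_measure:
  fixes P :: "('a::euclidean_space \<times> 'a set) set"
  assumes P: "P tagged_partial_division_of S"
    and sub: "\<And>t K. (t, K) \<in> P \<Longrightarrow> K \<subseteq> U" and U: "U \<in> lmeasurable"
  shows "(\<Sum>(t, K)\<in>P. measure lborel K) \<le> measure lebesgue U"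
proof -
  have div: "snd ` P division_of \<Union>(snd ` P)" by (rule partial_division_of_tagged_division[OF P])
  have "measure lborel K = measure lebesgue K" if "K \<in> snd ` P" for K
    using division_ofD(4)[OF div that] by auto
  then have "(\<Sum>(t, K)\<in>P. measure lborel K) = (\<Sum>K\<in>snd ` P. measure lebesgue K)"
    by (subst sum_tagged_partial_division_eq_sum_division[OF P]) (auto intro!: sum.cong)
  also have "\<dots> = measure lebesgue (\<Union>(snd ` P))" by (rule content_division[OF div])
  also have "\<dots> \<le> measure lebesgue U"
  proof (rule measure_mono_fmeasurable)
    show "\<Union>(snd ` P) \<subseteq> U" using sub by force
  qed (use U lmeasurable_division[OF div] in auto)
  finally show ?thesis .
qed

lemma has_real_derivative_straddle:
  assumes "(w has_real_derivative D) (at t within S)" "e > 0"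
  obtains \<delta> where "\<delta> > 0"
    "\<And>x y. x \<in> S \<Longrightarrow> y \<in> S \<Longrightarrow> x \<le> t \<Longrightarrow> t \<le> y \<Longrightarrow> \<bar>x - t\<bar> < \<delta> \<Longrightarrow> \<bar>y - t\<bar> < \<delta>
      \<Longrightarrow> w y - w x \<le> (D + e) * (y - x)"
proof -
  have "(w has_derivative (\<lambda>x. D * x)) (at t within S)"
    using assms(1) by (simp add: has_field_derivative_def)
  then obtain \<delta> where "\<delta> > 0" and \<delta>: "\<forall>y\<in>S. \<bar>y - t\<bar> < \<delta> \<longrightarrow> \<bar>w y - w t - D * (y - t)\<bar> \<le> e * \<bar>y - t\<bar>"
    unfolding has_derivative_within_alt real_norm_def using assms(2) by blast
  have "w y - w x \<le> (D + e) * (y - x)"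
    if xy: "x \<in> S" "y \<in> S" "x \<le> t" "t \<le> y" "\<bar>x - t\<bar> < \<delta>" "\<bar>y - t\<bar> < \<delta>" for x y
  proof -
    have "w y - w t - D * (y - t) \<le> e * (y - t)"
      using \<delta> xy abs_le_D1 by fastforce
    moreover have "- (w x - w t - D * (x - t)) \<le> e * (t - x)"
      using \<delta> xy abs_le_D2 by fastforce
    moreover have "(D + e) * (y - x) = D * (y - t) + e * (y - t) - D * (x - t) + e * (t - x)"
      by (simp add: algebra_simps)
    ultimately show ?thesis by linarith
  qed
  with \<open>\<delta> > 0\<close> show thesis using that by blast
qed

lemma null_set_open_cover:
  fixes N :: "'a::euclidean_space set"
  assumes N: "N \<in> null_sets lebesgue" and "d > 0"
  obtains U where "open U" "N \<subseteq> U" "U \<in> lmeasurable" "measure lebesgue U < d"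
proof -
  obtain U where U: "open U" "N \<subseteq> U" "emeasure lebesgue (U - N) < ennreal d"
    using sets_lebesgue_outer_open[of N d] N \<open>d > 0\<close> by blast
  have "U \<in> sets lebesgue" using U(1) by simp
  then have emU: "emeasure lebesgue U < ennreal d"
    using U(3) emeasure_Diff_null_set[OF N] by simp
  then have "emeasure lebesgue U < \<infinity>" by (rule order.strict_trans) simp
  then have Umeas: "U \<in> lmeasurable"
    unfolding fmeasurable_def using \<open>U \<in> sets lebesgue\<close> by blast
  then have "ennreal (measure lebesgue U) < ennreal d" using emU by (simp add: emeasure_eq_measure2)
  then have "measure lebesgue U < d" by (simp add: ennreal_less_iff)
  with U(1,2) Umeas show thesis using that by blast
qed

lemma gauge_straddle_off_null_set:
  fixes w g :: "real \<Rightarrow> real"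
  assumes der: "\<And>t. t \<in> {a..b} - N \<Longrightarrow> \<exists>D. (w has_real_derivative D) (at t within {a..b}) \<and> D \<le> g t"
    and U: "open U" "N \<subseteq> U" and "e > 0"
  obtains \<delta> where "\<And>t. \<delta> t > 0"
    "\<And>t x y. t \<in> {a..b} - N \<Longrightarrow> x \<in> {a..b} \<Longrightarrow> y \<in> {a..b} \<Longrightarrow> x \<le> t \<Longrightarrow> t \<le> y
      \<Longrightarrow> \<bar>x - t\<bar> < \<delta> t \<Longrightarrow> \<bar>y - t\<bar> < \<delta> t \<Longrightarrow> w y - w x \<le> (g t + e) * (y - x)"
    "\<And>t. t \<in> N \<Longrightarrow> ball t (\<delta> t) \<subseteq> U"
proof -
  have "\<exists>\<delta>>0. (t \<in> {a..b} - N \<longrightarrow> (\<forall>x\<in>{a..b}. \<forall>y\<in>{a..b}. x \<le> t \<longrightarrow> t \<le> y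
      \<longrightarrow> \<bar>x - t\<bar> < \<delta> \<longrightarrow> \<bar>y - t\<bar> < \<delta> \<longrightarrow> w y - w x \<le> (g t + e) * (y - x)))
    \<and> (t \<in> N \<longrightarrow> ball t \<delta> \<subseteq> U)" for t
  proof (cases "t \<in> {a..b} - N")
    case True
    then obtain D where D: "(w has_real_derivative D) (at t within {a..b})" "D \<le> g t"
      using der by blast
    obtain \<delta> where "\<delta> > 0" and \<delta>: "\<And>x y. x \<in> {a..b} \<Longrightarrow> y \<in> {a..b} \<Longrightarrow> x \<le> t \<Longrightarrow> t \<le> y
        \<Longrightarrow> \<bar>x - t\<bar> < \<delta> \<Longrightarrow> \<bar>y - t\<bar> < \<delta> \<Longrightarrow> w y - w x \<le> (D + e) * (y - x)"
      using has_real_derivative_straddle[OF D(1) \<open>e > 0\<close>] by blast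
    have "(D + e) * (y - x) \<le> (g t + e) * (y - x)" if "x \<le> t" "t \<le> y" for x y
      using D(2) that by (intro mult_right_mono) auto
    with \<delta> \<open>\<delta> > 0\<close> True show ?thesis by (meson DiffD2 order_trans)
  next
    case False
    show ?thesis
    proof (cases "t \<in> N")
      case True
      then obtain \<delta> where "\<delta> > 0" "ball t \<delta> \<subseteq> U" using U open_contains_ball by blast
      with False show ?thesis by blast
    qed (use False in \<open>auto intro: exI[of _ 1]\<close>)
  qed
  then obtain \<delta> where "\<And>t. \<delta> t > 0"
    "\<And>t. t \<in> {a..b} - N \<Longrightarrow> \<forall>x\<in>{a..b}. \<forall>y\<in>{a..b}. x \<le> t \<longrightarrow> t \<le> y
      \<longrightarrow> \<bar>x - t\<bar> < \<delta> t \<longrightarrow> \<bar>y - t\<bar> < \<delta> t \<longrightarrow> w y - w x \<le> (g t + e) * (y - x)"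
    "\<And>t. t \<in> N \<Longrightarrow> ball t (\<delta> t) \<subseteq> U"
    by metis
  then show thesis using that by blast
qed

lemma tagged_division_real_interval:
  fixes p :: "(real \<times> real set) set"
  assumes "p tagged_division_of {a..b}" "(t, K) \<in> p"
  obtains x y where "K = {x..y}" "x \<le> t" "t \<le> y" "a \<le> x" "y \<le> b"
proof -
  obtain x y where K: "K = {x..y}" using tagged_division_ofD(4)[OF assms] by (metis box_real(2))
  have "t \<in> K" "K \<subseteq> {a..b}" using tagged_division_ofD(2,3)[OF assms] by auto
  then have "x \<le> t" "t \<le> y" "x \<in> {a..b}" "y \<in> {a..b}" using K by auto
  then show thesis using that K by auto
qed

lemma gauge_abs_cont_increments:
  fixes w g :: "real \<Rightarrow> real"
  assumes ac: "abs_cont_on {a..b} w" and N: "N \<in> null_sets lebesgue"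
    and derN: "\<And>t. t \<in> {a..b} - N \<Longrightarrow> \<exists>D. (w has_real_derivative D) (at t within {a..b}) \<and> D \<le> g t"
    and "e > 0"
  obtains \<delta> where "\<And>t. \<delta> t > 0"
    "\<And>t x y. t \<in> {a..b} - N \<Longrightarrow> x \<in> {a..b} \<Longrightarrow> y \<in> {a..b} \<Longrightarrow> x \<le> t \<Longrightarrow> t \<le> y
      \<Longrightarrow> \<bar>x - t\<bar> < \<delta> t \<Longrightarrow> \<bar>y - t\<bar> < \<delta> t \<Longrightarrow> w y - w x \<le> (g t + e) * (y - x)"
    "\<And>P. P tagged_partial_division_of {a..b} \<Longrightarrow> (\<And>t K. (t, K) \<in> P \<Longrightarrow> t \<in> N \<and> K \<subseteq> ball t (\<delta> t))
      \<Longrightarrow> (\<Sum>(t, K)\<in>P. \<bar>w (Sup K) - w (Inf K)\<bar>) < e"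
proof -
  obtain d where "d > 0" and d: "\<And>P. P tagged_partial_division_of {a..b}
      \<Longrightarrow> (\<Sum>(t, K)\<in>P. measure lborel K) < d \<Longrightarrow> (\<Sum>(t, K)\<in>P. \<bar>w (Sup K) - w (Inf K)\<bar>) < e"
    using abs_cont_on_tagged_partial_division[OF ac \<open>e > 0\<close>] by blast
  obtain U where U: "open U" "N \<subseteq> U" "U \<in> lmeasurable" "measure lebesgue U < d"
    using null_set_open_cover[OF N \<open>d > 0\<close>] .
  obtain \<delta> where \<delta>: "\<And>t. \<delta> t > 0"
    "\<And>t x y. t \<in> {a..b} - N \<Longrightarrow> x \<in> {a..b} \<Longrightarrow> y \<in> {a..b} \<Longrightarrow> x \<le> t \<Longrightarrow> t \<le> y
      \<Longrightarrow> \<bar>x - t\<bar> < \<delta> t \<Longrightarrow> \<bar>y - t\<bar> < \<delta> t \<Longrightarrow> w y - w x \<le> (g t + e) * (y - x)"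
    "\<And>t. t \<in> N \<Longrightarrow> ball t (\<delta> t) \<subseteq> U"
    using gauge_straddle_off_null_set[OF derN U(1,2) \<open>e > 0\<close>] by blast
  have "(\<Sum>(t, K)\<in>P. \<bar>w (Sup K) - w (Inf K)\<bar>) < e"
    if P: "P tagged_partial_division_of {a..b}" and PN: "\<And>t K. (t, K) \<in> P \<Longrightarrow> t \<in> N \<and> K \<subseteq> ball t (\<delta> t)"
    for P
  proof (rule d[OF P])
    have "(\<Sum>(t, K)\<in>P. measure lborel K) \<le> measure lebesgue U"
      using PN \<delta>(3) by (intro sum_content_tagged_partial_division_le_measure[OF P _ U(3)]) blast
    then show "(\<Sum>(t, K)\<in>P. measure lborel K) < d" using U(4) by linarith
  qed
  with \<delta>(1,2) show thesis using that by blast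
qed

lemma tagged_division_increment_le_Riemann_sum:
  fixes p :: "(real \<times> real set) set" and w g :: "real \<Rightarrow> real"
  assumes p: "p tagged_division_of {a..b}" and "Q \<subseteq> p" "a \<le> b" "e \<ge> 0"
    and gnn: "\<And>t. t \<in> {a..b} \<Longrightarrow> g t \<ge> 0"
    and good: "\<And>t K. (t, K) \<in> p - Q \<Longrightarrow> w (Sup K) - w (Inf K) \<le> (g t + e) * measure lborel K"
    and bad: "(\<Sum>(t, K)\<in>Q. \<bar>w (Sup K) - w (Inf K)\<bar>) \<le> e"
  shows "w b - w a \<le> (\<Sum>(t, K)\<in>p. measure lborel K * g t) + e * (b - a) + e"
proof -
  have fin: "finite p" using p by blast
  have nonneg: "0 \<le> measure lborel K * g t + e * measure lborel K" if "(t, K) \<in> p" for t K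
    using gnn tagged_division_ofD(2,3)[OF p that] \<open>e \<ge> 0\<close> by auto
  have abs_le: "(\<Sum>(t, K)\<in>Q. w (Sup K) - w (Inf K)) \<le> (\<Sum>(t, K)\<in>Q. \<bar>w (Sup K) - w (Inf K)\<bar>)"
    by (rule sum_mono) auto
  have "w b - w a = (\<Sum>(t, K)\<in>p. w (Sup K) - w (Inf K))"
    using additive_tagged_division_1[OF \<open>a \<le> b\<close> p, of w] by simp
  also have "\<dots> = (\<Sum>(t, K)\<in>p - Q. w (Sup K) - w (Inf K)) + (\<Sum>(t, K)\<in>Q. w (Sup K) - w (Inf K))"
    using fin \<open>Q \<subseteq> p\<close> by (intro sum.subset_diff) auto
  also have "\<dots> \<le> (\<Sum>(t, K)\<in>p - Q. measure lborel K * g t + e * measure lborel K) + e"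
    using good bad abs_le by (intro add_mono sum_mono) (auto simp: algebra_simps)
  also have "\<dots> \<le> (\<Sum>(t, K)\<in>p. measure lborel K * g t + e * measure lborel K) + e"
    using nonneg by (intro add_right_mono sum_mono2[OF fin]) auto
  also have "\<dots> = (\<Sum>(t, K)\<in>p. measure lborel K * g t) + e * (\<Sum>(t, K)\<in>p. measure lborel K) + e"
    by (simp add: sum.distrib sum_distrib_left split_def)
  also have "(\<Sum>(t, K)\<in>p. measure lborel K) = b - a"
    using additive_content_tagged_division[of p a b] p \<open>a \<le> b\<close> by simp
  finally show ?thesis .
qed

lemma abs_cont_on_increment_le_integral_plus:
  fixes w g :: "real \<Rightarrow> real"
  assumes ab: "a \<le> b" and ac: "abs_cont_on {a..b} w" and gint: "g integrable_on {a..b}"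
    and gnn: "\<And>t. t \<in> {a..b} \<Longrightarrow> g t \<ge> 0" and N: "N \<in> null_sets lebesgue"
    and derN: "\<And>t. t \<in> {a..b} - N \<Longrightarrow> \<exists>D. (w has_real_derivative D) (at t within {a..b}) \<and> D \<le> g t"
    and "e > 0"
  shows "w b - w a \<le> integral {a..b} g + e * (2 + (b - a))"
proof -
  obtain \<delta> where \<delta>: "\<And>t. \<delta> t > 0"
    "\<And>t x y. t \<in> {a..b} - N \<Longrightarrow> x \<in> {a..b} \<Longrightarrow> y \<in> {a..b} \<Longrightarrow> x \<le> t \<Longrightarrow> t \<le> y
      \<Longrightarrow> \<bar>x - t\<bar> < \<delta> t \<Longrightarrow> \<bar>y - t\<bar> < \<delta> t \<Longrightarrow> w y - w x \<le> (g t + e) * (y - x)"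
    "\<And>P. P tagged_partial_division_of {a..b} \<Longrightarrow> (\<And>t K. (t, K) \<in> P \<Longrightarrow> t \<in> N \<and> K \<subseteq> ball t (\<delta> t))
      \<Longrightarrow> (\<Sum>(t, K)\<in>P. \<bar>w (Sup K) - w (Inf K)\<bar>) < e"
    using gauge_abs_cont_increments[OF ac N derN \<open>e > 0\<close>] by blast
  obtain \<gamma> where "gauge \<gamma>" and \<gamma>: "\<And>p. p tagged_division_of {a..b} \<Longrightarrow> \<gamma> fine p \<Longrightarrow>
      norm ((\<Sum>(t, K)\<in>p. measure lborel K *\<^sub>R g t) - integral {a..b} g) < e"
    using integrable_integral[OF gint] \<open>e > 0\<close> unfolding has_integral box_real(2)[symmetric] by meson
  have "gauge (\<lambda>t. \<gamma> t \<inter> ball t (\<delta> t))" using \<open>gauge \<gamma>\<close> \<delta>(1) by (intro gauge_Int gauge_ball_dependent) auto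
  then obtain p where p: "p tagged_division_of {a..b}" "(\<lambda>t. \<gamma> t \<inter> ball t (\<delta> t)) fine p"
    using fine_division_exists_real by blast
  have ball: "K \<subseteq> ball t (\<delta> t)" if "(t, K) \<in> p" for t K using p(2) that by (auto simp: fine_def)
  define Q where "Q = {(t, K) \<in> p. t \<in> N}"
  have "Q \<subseteq> p" by (auto simp: Q_def)
  have off_N: "w (Sup K) - w (Inf K) \<le> (g t + e) * measure lborel K" if tK: "(t, K) \<in> p - Q" for t K
  proof -
    obtain x y where K: "K = {x..y}" "x \<le> t" "t \<le> y" "a \<le> x" "y \<le> b"
      using tagged_division_real_interval[OF p(1)] tK by blast
    moreover have "x \<in> K" "y \<in> K" using K by auto
    then have "x \<in> ball t (\<delta> t)" "y \<in> ball t (\<delta> t)" using ball[of t K] tK by auto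
    then have "\<bar>x - t\<bar> < \<delta> t" "\<bar>y - t\<bar> < \<delta> t" by (auto simp: dist_real_def abs_minus_commute)
    moreover have "t \<in> {a..b} - N" using tK K by (auto simp: Q_def)
    ultimately show ?thesis using \<delta>(2)[of t x y] by auto
  qed
  have "Q tagged_partial_division_of {a..b}"
    using tagged_partial_division_subset[OF _ \<open>Q \<subseteq> p\<close>] p(1) by (auto simp: tagged_division_of_def)
  then have "(\<Sum>(t, K)\<in>Q. \<bar>w (Sup K) - w (Inf K)\<bar>) \<le> e"
    using \<delta>(3) ball by (force simp: Q_def)
  then have "w b - w a \<le> (\<Sum>(t, K)\<in>p. measure lborel K * g t) + e * (b - a) + e"
    using p(1) \<open>Q \<subseteq> p\<close> ab \<open>e > 0\<close> gnn off_N by (intro tagged_division_increment_le_Riemann_sum) auto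
  moreover have "(\<Sum>(t, K)\<in>p. measure lborel K * g t) < integral {a..b} g + e"
    using \<gamma>[OF p(1)] p(2) by (auto simp: fine_Int real_norm_def)
  moreover have "e * (2 + (b - a)) = e * (b - a) + 2 * e" by (simp add: algebra_simps)
  ultimately show ?thesis by linarith
qed

lemma abs_cont_on_increment_le_integral:
  fixes w g :: "real \<Rightarrow> real"
  assumes ab: "a \<le> b" and ac: "abs_cont_on {a..b} w" and gint: "g integrable_on {a..b}"
    and gnn: "\<And>t. t \<in> {a..b} \<Longrightarrow> g t \<ge> 0"
    and der: "AE t in lebesgue. t \<in> {a..b} \<longrightarrow>
       (\<exists>D. (w has_real_derivative D) (at t within {a..b}) \<and> D \<le> g t)"
  shows "w b - w a \<le> integral {a..b} g"
proof -
  obtain N where N: "{t \<in> space lebesgue. \<not> (t \<in> {a..b} \<longrightarrow>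
       (\<exists>D. (w has_real_derivative D) (at t within {a..b}) \<and> D \<le> g t))} \<subseteq> N"
    "emeasure lebesgue N = 0" "N \<in> sets lebesgue"
    using der by (rule AE_E)
  then have null: "N \<in> null_sets lebesgue" by auto
  have derN: "\<And>t. t \<in> {a..b} - N \<Longrightarrow> \<exists>D. (w has_real_derivative D) (at t within {a..b}) \<and> D \<le> g t"
    using N(1) by auto
  show ?thesis
  proof (rule field_le_epsilon)
    fix \<epsilon> :: real assume "\<epsilon> > 0"
    have "w b - w a \<le> integral {a..b} g + \<epsilon> / (2 + (b - a)) * (2 + (b - a))"
      by (rule abs_cont_on_increment_le_integral_plus[OF ab ac gint gnn null derN])
        (use \<open>\<epsilon> > 0\<close> ab in \<open>auto intro!: divide_pos_pos\<close>)
    then show "w b - w a \<le> integral {a..b} g + \<epsilon>" using ab by simp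
  qed
qed

lemma periodic_oscillation_le_integral:
  fixes w g :: "real \<Rightarrow> real"
  assumes ac: "abs_cont_on {a..b} w" and per: "w a = w b"
    and gint: "g integrable_on {a..b}" and gnn: "\<And>t. t \<in> {a..b} \<Longrightarrow> g t \<ge> 0"
    and der: "AE t in lebesgue. t \<in> {a..b} \<longrightarrow>
       (\<exists>D. (w has_real_derivative D) (at t within {a..b}) \<and> D \<le> g t)"
    and s: "s \<in> {a..b}" and t: "t \<in> {a..b}"
  shows "w s - w t \<le> integral {a..b} g"
proof -
  have incr: "w y - w x \<le> integral {x..y} g" if xy: "a \<le> x" "x \<le> y" "y \<le> b" for x y
  proof (rule abs_cont_on_increment_le_integral)
    show "abs_cont_on {x..y} w" using ac by (rule abs_cont_on_subset) (use xy in auto)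
    show "g integrable_on {x..y}" using gint by (rule integrable_on_subinterval) (use xy in auto)
    show "AE \<tau> in lebesgue. \<tau> \<in> {x..y} \<longrightarrow>
       (\<exists>D. (w has_real_derivative D) (at \<tau> within {x..y}) \<and> D \<le> g \<tau>)"
      using der by eventually_elim (use xy in \<open>force intro: DERIV_subset\<close>)
  qed (use xy gnn in auto)
  have mono: "integral {x..y} g \<le> integral {a..b} g" if "a \<le> x" "y \<le> b" for x y
    using that gnn by (intro integral_subset_le integrable_on_subinterval[OF gint]) auto
  show ?thesis
  proof (cases "t \<le> s")
    case True
    then show ?thesis using incr[of t s] mono[of t s] s t by auto
  next
    case False
    have "integral {a..s} g + integral {s..b} g = integral {a..b} g"
      using s by (intro Henstock_Kurzweil_Integration.integral_combine gint) auto
    moreover have "integral {t..b} g \<le> integral {s..b} g"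
      using s t gnn False by (intro integral_subset_le integrable_on_subinterval[OF gint]) auto
    ultimately show ?thesis using incr[of a s] incr[of t b] s t per by auto
  qed
qed

lemma lipschitz_of_derivative_bound:
  fixes g g' :: "real \<Rightarrow> real"
  assumes "\<And>t. t \<in> {a..b} \<Longrightarrow> (g has_real_derivative g' t) (at t within {a..b})"
    and "\<And>t. t \<in> {a..b} \<Longrightarrow> \<bar>g' t\<bar> \<le> B" and "x \<in> {a..b}" "y \<in> {a..b}"
  shows "\<bar>g x - g y\<bar> \<le> B * \<bar>x - y\<bar>"
  using field_differentiable_bound[of "{a..b}" g g' B x y] assms by auto

lemma abs_cont_on_continuous_derivative:
  fixes g g' :: "real \<Rightarrow> real"
  assumes der: "\<And>t. t \<in> {a..b} \<Longrightarrow> (g has_real_derivative g' t) (at t within {a..b})"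
    and cont: "continuous_on {a..b} g'"
  shows "abs_cont_on {a..b} g"
proof -
  have "bounded (g' ` {a..b})" by (rule compact_imp_bounded[OF compact_continuous_image[OF cont compact_Icc]])
  then obtain B where B: "\<And>t. t \<in> {a..b} \<Longrightarrow> \<bar>g' t\<bar> \<le> B"
    unfolding bounded_iff by fastforce
  show ?thesis
  proof (rule abs_cont_on_lipschitz[of "\<bar>B\<bar> + 1"])
    fix x y assume "x \<in> {a..b}" "y \<in> {a..b}"
    then have "\<bar>g x - g y\<bar> \<le> B * \<bar>x - y\<bar>" using lipschitz_of_derivative_bound[OF der B] by blast
    also have "\<dots> \<le> (\<bar>B\<bar> + 1) * \<bar>x - y\<bar>" by (intro mult_right_mono) auto
    finally show "\<bar>g x - g y\<bar> \<le> (\<bar>B\<bar> + 1) * \<bar>x - y\<bar>" .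
  qed simp
qed

lemma primitive_along_curve:
  fixes f u u' :: "real \<Rightarrow> real"
  assumes f: "continuous_on UNIV f"
    and der: "\<And>t. t \<in> {a..b} \<Longrightarrow> (u has_real_derivative u' t) (at t within {a..b})"
  obtains F where
    "\<And>t. t \<in> {a..b} \<Longrightarrow> ((\<lambda>t. F (u t)) has_real_derivative f (u t) * u' t) (at t within {a..b})"
proof -
  have "continuous_on {a..b} u" using der by (intro DERIV_continuous_on) auto
  then have "bounded (u ` {a..b})" by (rule compact_imp_bounded[OF compact_continuous_image[OF _ compact_Icc]])
  then obtain r where r: "\<And>t. t \<in> {a..b} \<Longrightarrow> \<bar>u t\<bar> \<le> r"
    unfolding bounded_iff by fastforce
  obtain F where F: "\<And>x. x \<in> {- r - 1..r + 1} \<Longrightarrow> (F has_vector_derivative f x) (at x within {- r - 1..r + 1})"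
    using antiderivative_continuous[of "- r - 1" "r + 1" f] continuous_on_subset[OF f] by blast
  have "(F has_real_derivative f (u t)) (at (u t))" if t: "t \<in> {a..b}" for t
  proof -
    have int: "u t \<in> interior {- r - 1..r + 1}" using r[OF t] by auto
    then have "(F has_vector_derivative f (u t)) (at (u t) within {- r - 1..r + 1})"
      using F interior_subset by blast
    then show ?thesis
      using at_within_interior[OF int] by (simp add: has_real_derivative_iff_has_vector_derivative)
  qed
  then show thesis using that DERIV_chain2[OF _ der] by blast
qed

lemma has_real_derivative_nonpos_at_right_max:
  fixes g :: "real \<Rightarrow> real"
  assumes d: "(g has_real_derivative D) (at t within S)"
    and tb: "t < c" and sub: "{t<..c} \<subseteq> S"
    and le: "\<And>s. s \<in> {t<..c} \<Longrightarrow> g s \<le> g t"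
  shows "D \<le> 0"
proof -
  have "((\<lambda>y. (g y - g t) / (y - t)) \<longlongrightarrow> D) (at t within S)"
    using d by (simp add: has_field_derivative_iff)
  then have L: "((\<lambda>y. (g y - g t) / (y - t)) \<longlongrightarrow> D) (at t within {t<..c})"
    by (rule tendsto_within_subset) (use sub in auto)
  have nb: "at t within {t<..c} \<noteq> bot"
    using tb by (simp add: at_within_eq_bot_iff)
  have ev: "eventually (\<lambda>y. (g y - g t) / (y - t) \<le> 0) (at t within {t<..c})"
    unfolding eventually_at_filter
    by (intro always_eventually allI impI) (auto intro!: divide_nonpos_pos simp: le)
  show ?thesis using tendsto_upperbound[OF L ev nb] .
qed

lemma has_real_derivative_nonneg_at_left_max:
  fixes g :: "real \<Rightarrow> real"
  assumes d: "(g has_real_derivative D) (at t within S)"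
    and ta: "c < t" and sub: "{c..<t} \<subseteq> S"
    and le: "\<And>s. s \<in> {c..<t} \<Longrightarrow> g s \<le> g t"
  shows "D \<ge> 0"
proof -
  have "((\<lambda>y. (g y - g t) / (y - t)) \<longlongrightarrow> D) (at t within S)"
    using d by (simp add: has_field_derivative_iff)
  then have L: "((\<lambda>y. (g y - g t) / (y - t)) \<longlongrightarrow> D) (at t within {c..<t})"
    by (rule tendsto_within_subset) (use sub in auto)
  have nb: "at t within {c..<t} \<noteq> bot"
    using ta by (simp add: at_within_eq_bot_iff)
  have ev: "eventually (\<lambda>y. (g y - g t) / (y - t) \<ge> 0) (at t within {c..<t})"
    unfolding eventually_at_filter
    by (intro always_eventually allI impI) (auto intro!: divide_nonpos_neg simp: le)
  show ?thesis using tendsto_lowerbound[OF L ev nb] .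
qed

lemma last_point_of_superlevel_set:
  fixes u :: "real \<Rightarrow> real"
  assumes cont: "continuous_on {a..b} u" and "a \<le> b" "u a \<ge> s"
  obtains c where "c \<in> {a..b}" "u c \<ge> s" "\<And>\<tau>. \<tau> \<in> {c<..b} \<Longrightarrow> u \<tau> < s"
proof -
  define A where "A = {a..b} \<inter> u -` {s..}"
  have "closed A" unfolding A_def by (rule continuous_closed_preimage[OF cont]) auto
  moreover have "a \<in> A" "bdd_above A" using assms by (auto simp: A_def intro!: bdd_aboveI[of _ b])
  ultimately have "Sup A \<in> A" using closed_contains_Sup by blast
  moreover have "u \<tau> < s" if "\<tau> \<in> {Sup A<..b}" for \<tau>
    using cSup_upper[OF _ \<open>bdd_above A\<close>, of \<tau>] that \<open>Sup A \<in> A\<close> by (force simp: A_def)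
  ultimately show thesis using that[of "Sup A"] by (auto simp: A_def)
qed

lemma last_level_crossing:
  fixes u u' :: "real \<Rightarrow> real"
  assumes der: "\<And>t. t \<in> {a..b} \<Longrightarrow> (u has_real_derivative u' t) (at t within {a..b})"
    and "a \<le> b" and ua: "u a \<ge> s" and ub: "u b \<le> s" "u b < s \<or> u' b \<le> 0"
  obtains c where "c \<in> {a..b}" "u c = s" "u' c \<le> 0"
proof -
  have cont: "continuous_on {a..b} u" using der by (intro DERIV_continuous_on) auto
  obtain c where c: "c \<in> {a..b}" "u c \<ge> s" and below: "\<And>\<tau>. \<tau> \<in> {c<..b} \<Longrightarrow> u \<tau> < s"
    using last_point_of_superlevel_set[OF cont \<open>a \<le> b\<close> ua] by blast
  show thesis
  proof (cases "c = b")
    case True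
    then show thesis using that c ub by force
  next
    case False
    then have "c < b" using c by auto
    have "(u \<longlongrightarrow> u c) (at c within {a..b})" using cont c by (simp add: continuous_on_def)
    then have "(u \<longlongrightarrow> u c) (at c within {c<..b})" by (rule tendsto_within_subset) (use c in auto)
    moreover have "eventually (\<lambda>\<tau>. u \<tau> \<le> s) (at c within {c<..b})"
      using below by (auto simp: eventually_at_filter less_imp_le)
    ultimately have "u c \<le> s"
      using \<open>c < b\<close> by (intro tendsto_upperbound) (auto simp: at_within_eq_bot_iff)
    moreover have "u' c \<le> 0"
    proof (rule has_real_derivative_nonpos_at_right_max[OF der[OF c(1)] \<open>c < b\<close>])
      show "{c<..b} \<subseteq> {a..b}" using c by auto
      show "\<And>\<tau>. \<tau> \<in> {c<..b} \<Longrightarrow> u \<tau> \<le> u c" using below c(2) by fastforce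
    qed
    ultimately show thesis using that c by auto
  qed
qed

lemma periodic_min_nonpos_derivative:
  fixes u u' :: "real \<Rightarrow> real"
  assumes "0 < T"
    and der: "\<And>t. t \<in> {0..T} \<Longrightarrow> (u has_real_derivative u' t) (at t within {0..T})"
    and per: "u 0 = u T"
  obtains m where "m \<in> {0<..T}" "\<And>y. y \<in> {0..T} \<Longrightarrow> u m \<le> u y" "u' m \<le> 0"
proof -
  have cont: "continuous_on {0..T} u" using der by (intro DERIV_continuous_on) auto
  obtain m0 where m0: "m0 \<in> {0..T}" "\<And>y. y \<in> {0..T} \<Longrightarrow> u m0 \<le> u y"
    using continuous_attains_inf[OF compact_Icc _ cont] \<open>0 < T\<close> by auto
  \<comment> \<open>by periodicity the minimum is also attained at a point with room to its left\<close>
  obtain m where m: "m \<in> {0<..T}" "\<And>y. y \<in> {0..T} \<Longrightarrow> u m \<le> u y"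
  proof (cases "m0 = 0")
    case True
    then show thesis using that[of T] m0 per \<open>0 < T\<close> by auto
  next
    case False
    then show thesis using that[of m0] m0 by auto
  qed
  have "- u' m \<ge> 0"
  proof (rule has_real_derivative_nonneg_at_left_max[where c=0 and S="{0..T}"])
    show "((\<lambda>x. - u x) has_real_derivative - u' m) (at m within {0..T})"
      using der[of m] m(1) by (auto intro!: derivative_eq_intros)
  qed (use m in auto)
  then show thesis using that m by simp
qed

lemma periodic_level_with_nonpos_derivative:
  fixes u u' :: "real \<Rightarrow> real"
  assumes "0 < T"
    and der: "\<And>t. t \<in> {0..T} \<Longrightarrow> (u has_real_derivative u' t) (at t within {0..T})"
    and per: "u 0 = u T" and t: "t \<in> {0..T}"
  obtains c where "c \<in> {0..T}" "u c = u t" "u' c \<le> 0"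
proof -
  have cont: "continuous_on {0..T} u" using der by (intro DERIV_continuous_on) auto
  obtain M where M: "M \<in> {0..T}" "\<And>y. y \<in> {0..T} \<Longrightarrow> u y \<le> u M"
    using continuous_attains_sup[OF compact_Icc _ cont] \<open>0 < T\<close> by auto
  obtain m where m: "m \<in> {0<..T}" "\<And>y. y \<in> {0..T} \<Longrightarrow> u m \<le> u y" "u' m \<le> 0"
    using periodic_min_nonpos_derivative[OF \<open>0 < T\<close> der per] by blast
  have derI: "(u has_real_derivative u' \<tau>) (at \<tau> within {x..y})"
    if "0 \<le> x" "y \<le> T" "\<tau> \<in> {x..y}" for x y \<tau>
    by (rule DERIV_subset[OF der]) (use that in auto)
  have "u M \<ge> u t" "u m \<le> u t" using M m t by auto
  consider "M \<le> m" | "m < M" "u 0 \<ge> u t" | "m < M" "u 0 < u t" by linarith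
  then show thesis
  proof cases
    case 1
    show thesis
    proof (rule last_level_crossing[of M m u u' "u t"])
      fix c assume "c \<in> {M..m}" "u c = u t" "u' c \<le> 0"
      then show thesis using M m by (intro that) auto
    qed (use 1 M m derI \<open>u M \<ge> u t\<close> \<open>u m \<le> u t\<close> m(3) in auto)
  next
    case 2
    show thesis
    proof (rule last_level_crossing[of 0 m u u' "u t"])
      fix c assume "c \<in> {0..m}" "u c = u t" "u' c \<le> 0"
      then show thesis using m by (intro that) auto
    qed (use 2 m derI \<open>u m \<le> u t\<close> m(3) in auto)
  next
    case 3
    show thesis
    proof (rule last_level_crossing[of M T u u' "u t"])
      fix c assume "c \<in> {M..T}" "u c = u t" "u' c \<le> 0"
      then show thesis using M by (intro that) auto
    qed (use 3 M derI per \<open>u M \<ge> u t\<close> in auto)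
  qed
qed

lemma periodic_solution_energy_oscillation:
  fixes \<phi> f u u' \<gamma> :: "real \<Rightarrow> real" and h :: "real \<Rightarrow> real \<Rightarrow> real"
  assumes f: "continuous_on UNIV f"
    and gint: "\<gamma> integrable_on {0..T}" and gnn: "\<And>t. t \<in> {0..T} \<Longrightarrow> \<gamma> t \<ge> 0"
    and h_lower: "AE t in lebesgue. t \<in> {0..T} \<longrightarrow> (\<forall>x. h t x \<ge> - \<gamma> t)"
    and lam: "lam \<in> {0<..1}" and sol: "periodic_solution \<phi> f h T lam u u'"
  obtains F where "\<And>x y. x \<in> {0..T} \<Longrightarrow> y \<in> {0..T} \<Longrightarrow>
    \<phi> (u' x) + lam * F (u x) - (\<phi> (u' y) + lam * F (u y)) \<le> integral {0..T} \<gamma>"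
proof -
  have der: "\<And>t. t \<in> {0..T} \<Longrightarrow> (u has_real_derivative u' t) (at t within {0..T})"
    and "continuous_on {0..T} u'" "u 0 = u T" "u' 0 = u' T"
    and ac_phi: "abs_cont_on {0..T} (\<lambda>t. \<phi> (u' t))"
    and der_phi: "AE t in lebesgue. t \<in> {0..T} \<longrightarrow> ((\<lambda>s. \<phi> (u' s)) has_real_derivative
        (- lam * f (u t) * u' t - lam * h t (u t))) (at t within {0..T})"
    using sol unfolding periodic_solution_def by auto
  have "continuous_on {0..T} u" using der by (intro DERIV_continuous_on) auto
  obtain F where F: "\<And>t. t \<in> {0..T} \<Longrightarrow>
      ((\<lambda>t. F (u t)) has_real_derivative f (u t) * u' t) (at t within {0..T})"
    using primitive_along_curve[OF f der] by blast
  \<comment> \<open>\<open>\<lambda> f(u) u'\<close> is the derivative of \<open>\<lambda> F(u)\<close>, so \<open>w' = - \<lambda> h(t,u)\<close> a.e.\<close>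
  define w where "w t = \<phi> (u' t) + lam * F (u t)" for t
  have "abs_cont_on {0..T} w" unfolding w_def
  proof (intro abs_cont_on_add[OF ac_phi] abs_cont_on_continuous_derivative)
    show "((\<lambda>t. lam * F (u t)) has_real_derivative lam * (f (u t) * u' t)) (at t within {0..T})"
      if "t \<in> {0..T}" for t using F[OF that] by (rule DERIV_cmult)
    show "continuous_on {0..T} (\<lambda>t. lam * (f (u t) * u' t))"
      by (intro continuous_intros continuous_on_compose2[OF f \<open>continuous_on {0..T} u\<close>]
          \<open>continuous_on {0..T} u'\<close>) auto
  qed
  moreover have "AE t in lebesgue. t \<in> {0..T} \<longrightarrow>
      (\<exists>D. (w has_real_derivative D) (at t within {0..T}) \<and> D \<le> \<gamma> t)"
    using der_phi h_lower
  proof eventually_elim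
    case (elim t)
    show ?case
    proof
      assume t: "t \<in> {0..T}"
      have "(w has_real_derivative - lam * h t (u t)) (at t within {0..T})"
        unfolding w_def using DERIV_add[OF elim(1)[rule_format, OF t] DERIV_cmult[OF F[OF t], of lam]]
        by (simp add: algebra_simps)
      moreover have "- h t (u t) \<le> \<gamma> t" using elim(2)[rule_format, OF t, of "u t"] by linarith
      then have "lam * (- h t (u t)) \<le> lam * \<gamma> t" using lam by (intro mult_left_mono) auto
      then have "- lam * h t (u t) \<le> lam * \<gamma> t" by simp
      moreover have "lam * \<gamma> t \<le> \<gamma> t" using gnn[OF t] lam by (simp add: mult_left_le_one_le)
      ultimately show "\<exists>D. (w has_real_derivative D) (at t within {0..T}) \<and> D \<le> \<gamma> t" by force
    qed
  qed
  moreover have "w 0 = w T" using \<open>u 0 = u T\<close> \<open>u' 0 = u' T\<close> by (simp add: w_def)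
  ultimately have "w x - w y \<le> integral {0..T} \<gamma>" if "x \<in> {0..T}" "y \<in> {0..T}" for x y
    using periodic_oscillation_le_integral[OF _ _ gint gnn _ that] by blast
  then show thesis using that unfolding w_def by blast
qed

lemma periodic_solution_phi_derivative_bound:
  fixes \<phi> f u u' \<gamma> :: "real \<Rightarrow> real" and h :: "real \<Rightarrow> real \<Rightarrow> real"
  assumes "T > 0" and "mono \<phi>" and "\<phi> 0 = 0" and f: "continuous_on UNIV f"
    and gint: "\<gamma> integrable_on {0..T}" and gnn: "\<And>t. t \<in> {0..T} \<Longrightarrow> \<gamma> t \<ge> 0"
    and h_lower: "AE t in lebesgue. t \<in> {0..T} \<longrightarrow> (\<forall>x. h t x \<ge> - \<gamma> t)"
    and lam: "lam \<in> {0<..1}" and sol: "periodic_solution \<phi> f h T lam u u'"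
    and s: "s \<in> {0..T}"
  shows "\<bar>\<phi> (u' s)\<bar> \<le> integral {0..T} \<gamma>"
proof -
  obtain F where osc: "\<And>x y. x \<in> {0..T} \<Longrightarrow> y \<in> {0..T} \<Longrightarrow>
      \<phi> (u' x) + lam * F (u x) - (\<phi> (u' y) + lam * F (u y)) \<le> integral {0..T} \<gamma>"
    using periodic_solution_energy_oscillation[OF f gint gnn h_lower lam sol] by blast
  have der: "\<And>t. t \<in> {0..T} \<Longrightarrow> (u has_real_derivative u' t) (at t within {0..T})" and "u 0 = u T"
    using sol unfolding periodic_solution_def by auto
  obtain c where c: "c \<in> {0..T}" "u c = u s" "u' c \<le> 0"
    using periodic_level_with_nonpos_derivative[OF \<open>T > 0\<close> der \<open>u 0 = u T\<close> s] .
  have "\<phi> (u' c) \<le> 0" using monoD[OF \<open>mono \<phi>\<close> c(3)] \<open>\<phi> 0 = 0\<close> by simp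
  then have upper: "\<phi> (u' s) \<le> integral {0..T} \<gamma>" using osc[OF s c(1)] c(2) by simp
  have der_neg: "\<And>t. t \<in> {0..T} \<Longrightarrow> ((\<lambda>t. - u t) has_real_derivative - u' t) (at t within {0..T})"
    using der by (auto intro!: derivative_eq_intros)
  obtain c' where c': "c' \<in> {0..T}" "- u c' = - u s" "- u' c' \<le> 0"
    using periodic_level_with_nonpos_derivative[OF \<open>T > 0\<close> der_neg _ s] \<open>u 0 = u T\<close> by auto
  have "\<phi> (u' c') \<ge> 0" using monoD[OF \<open>mono \<phi>\<close>, of 0 "u' c'"] c'(3) \<open>\<phi> 0 = 0\<close> by simp
  then have lower: "\<phi> (u' s) \<ge> - integral {0..T} \<gamma>" using osc[OF c'(1) s] c'(2) by simp
  show ?thesis using upper lower by linarith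
qed

lemma strict_mono_abs_le_inverse_bound:
  fixes \<phi> \<psi> :: "real \<Rightarrow> real"
  assumes "strict_mono \<phi>" "\<And>y. \<phi> (\<psi> y) = y" "\<bar>\<phi> v\<bar> \<le> c"
  shows "\<bar>v\<bar> \<le> max (\<psi> c) (- \<psi> (- c))"
proof -
  have "\<phi> v \<le> \<phi> (\<psi> c)" "\<phi> (\<psi> (- c)) \<le> \<phi> v" using assms(2,3) by auto
  then have "v \<le> \<psi> c" "\<psi> (- c) \<le> v" using assms(1) by (simp_all add: strict_mono_less_eq)
  then show ?thesis by linarith
qed

lemma oscillation_le_of_derivative_bound:
  fixes u u' :: "real \<Rightarrow> real"
  assumes "a \<le> b" and der: "\<And>t. t \<in> {a..b} \<Longrightarrow> (u has_real_derivative u' t) (at t within {a..b})"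
    and bound: "\<And>t. t \<in> {a..b} \<Longrightarrow> \<bar>u' t\<bar> \<le> R"
  shows "Sup (u ` {a..b}) - Inf (u ` {a..b}) \<le> (b - a) * R"
proof -
  have cont: "continuous_on {a..b} u" using der by (intro DERIV_continuous_on) auto
  obtain M where M: "M \<in> {a..b}" "\<And>y. y \<in> {a..b} \<Longrightarrow> u y \<le> u M"
    using continuous_attains_sup[OF compact_Icc _ cont] \<open>a \<le> b\<close> by auto
  obtain m where m: "m \<in> {a..b}" "\<And>y. y \<in> {a..b} \<Longrightarrow> u m \<le> u y"
    using continuous_attains_inf[OF compact_Icc _ cont] \<open>a \<le> b\<close> by auto
  have "Sup (u ` {a..b}) = u M" using M by (intro cSup_eq_maximum) auto
  moreover have "Inf (u ` {a..b}) = u m" using m by (intro cInf_eq_minimum) auto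
  moreover have "\<bar>u M - u m\<bar> \<le> R * \<bar>M - m\<bar>"
    using lipschitz_of_derivative_bound[OF der bound M(1) m(1)] .
  moreover have "R * \<bar>M - m\<bar> \<le> R * (b - a)"
    using M m bound[OF M(1)] by (intro mult_left_mono) auto
  ultimately show ?thesis by (simp add: mult.commute)
qed

lemma integral_abs_le_of_bound:
  fixes v :: "real \<Rightarrow> real"
  assumes "a \<le> b" "continuous_on {a..b} v" "\<And>t. t \<in> {a..b} \<Longrightarrow> \<bar>v t\<bar> \<le> R"
  shows "integral {a..b} (\<lambda>t. \<bar>v t\<bar>) \<le> (b - a) * R"
proof -
  have "integral {a..b} (\<lambda>t. \<bar>v t\<bar>) \<le> integral {a..b} (\<lambda>t. R)"
    using assms by (intro integral_le integrable_continuous_interval continuous_intros) auto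
  then show ?thesis using \<open>a \<le> b\<close> by simp
qed

theorem lemma2p4:
  fixes \<phi> f :: "real \<Rightarrow> real" and h :: "real \<Rightarrow> real \<Rightarrow> real"
    and \<gamma> :: "real \<Rightarrow> real" and T :: real
  assumes T: "T > 0"
    and phi_homeo: "\<exists>\<psi>. homeomorphism UNIV UNIV \<phi> \<psi>"
    and phi_incr: "strict_mono \<phi>"
    and phi0: "\<phi> 0 = 0"
    and f_cont: "continuous_on UNIV f"
    and h_car: "caratheodory T h"
    and gamma_int: "\<gamma> absolutely_integrable_on {0..T}"
    and gamma_nonneg: "\<forall>t\<in>{0..T}. \<gamma> t \<ge> 0"
    and h_lower: "AE t in lebesgue. t \<in> {0..T} \<longrightarrow> (\<forall>x. h t x \<ge> - \<gamma> t)"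
  shows "(\<exists>K0. \<forall>h'. caratheodory T h' \<and>
              (AE t in lebesgue. t \<in> {0..T} \<longrightarrow> (\<forall>x. h' t x \<ge> - \<gamma> t)) \<longrightarrow>
            (\<forall>lam u u'. lam \<in> {0<..1} \<and> periodic_solution \<phi> f h' T lam u u' \<longrightarrow>
               Sup (u ` {0..T}) - Inf (u ` {0..T}) \<le> K0 \<and>
               integral {0..T} (\<lambda>t. \<bar>u' t\<bar>) \<le> K0))
       \<and> (\<forall>l1 l2. l1 < l2 \<longrightarrow> (\<exists>K1>0. \<forall>lam u u'.
              lam \<in> {0<..1} \<and> periodic_solution \<phi> f h T lam u u' \<and>
              (\<forall>t\<in>{0..T}. l1 \<le> u t \<and> u t \<le> l2) \<longrightarrow>
              (\<forall>t\<in>{0..T}. \<bar>u' t\<bar> \<le> K1)))"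
proof -
  obtain \<psi> where "homeomorphism UNIV UNIV \<phi> \<psi>" using phi_homeo by blast
  then have inverse: "\<And>y. \<phi> (\<psi> y) = y" by (simp add: homeomorphism_def)
  have gint: "\<gamma> integrable_on {0..T}" using gamma_int by (simp add: absolutely_integrable_on_def)
  define R where "R = max (\<psi> (integral {0..T} \<gamma>)) (- \<psi> (- integral {0..T} \<gamma>))"
  have bound: "\<bar>u' t\<bar> \<le> R"
    if "AE t in lebesgue. t \<in> {0..T} \<longrightarrow> (\<forall>x. h' t x \<ge> - \<gamma> t)"
      and "lam \<in> {0<..1}" "periodic_solution \<phi> f h' T lam u u'" "t \<in> {0..T}" for h' lam u u' t
    unfolding R_def using gamma_nonneg that
    by (intro strict_mono_abs_le_inverse_bound[OF phi_incr inverse]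
        periodic_solution_phi_derivative_bound[OF T strict_mono_mono[OF phi_incr] phi0 f_cont gint]) auto
  have "Sup (u ` {0..T}) - Inf (u ` {0..T}) \<le> T * R \<and> integral {0..T} (\<lambda>t. \<bar>u' t\<bar>) \<le> T * R"
    if "AE t in lebesgue. t \<in> {0..T} \<longrightarrow> (\<forall>x. h' t x \<ge> - \<gamma> t)"
      and sol: "lam \<in> {0<..1}" "periodic_solution \<phi> f h' T lam u u'" for h' lam u u'
  proof -
    have "\<And>t. t \<in> {0..T} \<Longrightarrow> (u has_real_derivative u' t) (at t within {0..T})"
      and "continuous_on {0..T} u'" using sol(2) unfolding periodic_solution_def by auto
    then show ?thesis
      using oscillation_le_of_derivative_bound[of 0 T u u' R] integral_abs_le_of_bound[of 0 T u' R]
        bound[OF that] T by auto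
  qed
  moreover have "\<bar>u' t\<bar> \<le> \<bar>R\<bar> + 1"
    if "lam \<in> {0<..1}" "periodic_solution \<phi> f h T lam u u'" "t \<in> {0..T}" for lam u u' t
    using bound[OF h_lower that] by linarith
  ultimately show ?thesis by (intro conjI exI[of _ "T * R"] allI impI exI[of _ "\<bar>R\<bar> + 1"]) auto
qed

end
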